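(* Let $A_1,A_2\in\mathbb{R}^{2\times2}$ be Hurwitz matrices. If $\det([A_1,A_2])\ge0$, where $[A_1,A_2]=A_1A_2-A_2A_1$, then the switched system $\dot x=u(t)A_1x+(1-u(t))A_2x$, $u:[0,\infty)\to\{0,1\}$ measurable, admits a common quadratic Lyapunov function, i.e. there is a symmetric positive definite $P$ such that $A_1^TP+PA_1$ and $A_2^TP+PA_2$ are both negative definite.
   Context: A real $2\times2$ matrix is Hurwitz if all its eigenvalues have negative real part. *)

theory Defs
  imports "HOL-Analysis.Analysis"
begin

definition cmat :: "real^'n^'n \<Rightarrow> complex^'n^'n" where
  "cmat A = (\<chi> i j. complex_of_real (A $ i $ j))"

definition is_eigenvalue :: "real^'n^'n \<Rightarrow> complex \<Rightarrow> bool" where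
  "is_eigenvalue A c \<longleftrightarrow> (\<exists>v::complex^'n. v \<noteq> 0 \<and> cmat A *v v = c *s v)"

definition hurwitz :: "real^'n^'n \<Rightarrow> bool" where
  "hurwitz A \<longleftrightarrow> (\<forall>c. is_eigenvalue A c \<longrightarrow> Re c < 0)"

definition pos_def :: "real^'n^'n \<Rightarrow> bool" where
  "pos_def P \<longleftrightarrow> (\<forall>x. x \<noteq> 0 \<longrightarrow> x \<bullet> (P *v x) > 0)"

definition neg_def :: "real^'n^'n \<Rightarrow> bool" where
  "neg_def P \<longleftrightarrow> (\<forall>x. x \<noteq> 0 \<longrightarrow> x \<bullet> (P *v x) < 0)"

end

theory Submission
  imports Defs
begin

text \<open>
  For 2x2 matrices write twist A P = (P A)12 - (P A)21 for the skew part of P A. For symmetric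
  P one has det (A^T P + P A) = 4 det A det P - (twist A P)^2, and a symmetric matrix with
  positive determinant is definite; pairing with the adjugate of P shows that, for positive
  definite P and tr A < 0, the Lyapunov matrix A^T P + P A is negative definite as soon as
  (twist A P)^2 < 4 det A det P. Since twist A P is linear in P, it suffices to find one
  positive definite P satisfying this twist bound for A1 and A2 simultaneously.

  Hurwitz matrices have negative trace and positive determinant. If a nonzero positive
  semidefinite P0 has zero twist against both matrices, then P0 + e I works for small e > 0.
  When the commutator C = [A1, A2] is nonzero with det C \<ge> 0, such a P0 is \<plusminus>J C, with J
  the rotation by a right angle, because twist A (J C) = tr (C A) and tr (C Ai) = 0. When A1
  and A2 commute, their traceless parts are proportional: with complex eigenvalues \<plusminus>J A1_0
  is a certificate directly (A1_0 the traceless part of A1), with real eigenvalues w w^T for a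
  real eigenvector w of A1^T serves as P0.
\<close>

lemma kernel_nonzero:
  fixes M :: "'a::field^'n^'n"
  assumes "det M = 0"
  shows "\<exists>v. v \<noteq> 0 \<and> M *v v = 0"
proof -
  have "\<not> inj ((*v) M)"
    using det_nz_iff_inj_gen[of "(*v) M"] assms by simp
  then obtain x y where "x \<noteq> y" "M *v x = M *v y" unfolding inj_def by auto
  then show ?thesis
    by (intro exI[of _ "x - y"]) (simp add: matrix_vector_mult_diff_distrib)
qed

lemma char_root_eigenvector:
  fixes M :: "'a::field^2^2"
  assumes "\<mu>^2 - trace M * \<mu> + det M = 0"
  shows "\<exists>v. v \<noteq> 0 \<and> M *v v = \<mu> *s v"
proof -
  have "det (M - mat \<mu>) = \<mu>^2 - trace M * \<mu> + det M"
    by (simp add: det_2 trace_def sum_2 mat_def power2_eq_square algebra_simps)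
  then obtain v where v: "v \<noteq> 0" "(M - mat \<mu>) *v v = 0"
    using kernel_nonzero assms by metis
  have "M *v v = \<mu> *s v"
    using v(2) by (simp add: vec_eq_iff forall_2 matrix_vector_mult_def mat_def sum_2 algebra_simps)
  then show ?thesis using v(1) by blast
qed

lemma is_eigenvalue_of_char_root:
  fixes A :: "real^2^2"
  assumes "l^2 - of_real (trace A) * l + of_real (det A) = 0"
  shows "is_eigenvalue A l"
proof -
  have "trace (cmat A) = of_real (trace A)" "det (cmat A) = of_real (det A)"
    by (simp_all add: cmat_def trace_def sum_2 det_2)
  then show ?thesis
    using char_root_eigenvector[of l "cmat A"] assms unfolding is_eigenvalue_def by simp
qed

text \<open>
  A Hurwitz 2x2 matrix has negative trace and positive determinant: according as the
  discriminant is nonnegative or negative, the larger real root, resp. the real part of the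
  complex roots, of the characteristic polynomial must be negative.
\<close>
lemma hurwitz_trace_det:
  fixes A :: "real^2^2"
  assumes "hurwitz A"
  shows "trace A < 0 \<and> det A > 0"
proof -
  define t where "t = trace A"
  define D where "D = det A"
  have root: "Re l < 0" if "l^2 - of_real t * l + of_real D = 0" for l
    using assms is_eigenvalue_of_char_root[of l A] that unfolding hurwitz_def t_def D_def by blast
  show ?thesis
  proof (cases "t^2 - 4*D \<ge> 0")
    case True
    define s where "s = sqrt (t^2 - 4*D)"
    have s: "s^2 = t^2 - 4*D" "s \<ge> 0" using True by (auto simp: s_def)
    have "((t+s)/2)^2 - t*((t+s)/2) + D = 0"
      using s by (simp add: power2_eq_square field_simps)
    then have "Re (of_real ((t+s)/2)) < 0"
      by (intro root) (metis of_real_add of_real_diff of_real_mult of_real_power of_real_0)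
    then have "t + s < 0" by simp
    then have "s^2 < (-t)^2" using s(2) by (intro power_strict_mono) auto
    then show ?thesis using \<open>t + s < 0\<close> s unfolding t_def D_def by simp
  next
    case False
    define s where "s = sqrt (4*D - t^2)"
    have s: "s^2 = 4*D - t^2" using False by (auto simp: s_def)
    have "(Complex (t/2) (s/2))^2 - of_real t * Complex (t/2) (s/2) + of_real D = 0"
      using s by (simp add: complex_eq_iff power2_eq_square field_simps)
    then have "t/2 < 0" using root by fastforce
    moreover have "D > 0" using False by (smt (verit) zero_le_power2)
    ultimately show ?thesis unfolding t_def D_def by simp
  qed
qed

lemma matrix2_eq_iff:
  fixes M N :: "'a^2^2"
  shows "M = N \<longleftrightarrow> M$1$1 = N$1$1 \<and> M$1$2 = N$1$2 \<and> M$2$1 = N$2$1 \<and> M$2$2 = N$2$2"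
  by (simp add: vec_eq_iff forall_2)

lemma symmetric_2x2_entry:
  fixes M :: "'a^2^2"
  assumes "transpose M = M"
  shows "M$2$1 = M$1$2"
proof -
  have "M$2$1 = transpose M $1$2" by (simp add: transpose_def)
  then show ?thesis using assms by simp
qed

lemma transpose_add:
  fixes X Y :: "'a::semiring_1^'n^'m"
  shows "transpose (X + Y) = transpose X + transpose Y"
  by (simp add: transpose_def vec_eq_iff)

lemma matrix_diff_rdistrib:
  fixes X Y Z :: "'a::comm_ring_1^'n^'n"
  shows "(X - Y) ** Z = X ** Z - Y ** Z"
  by (simp add: matrix_matrix_mult_def vec_eq_iff sum_subtractf left_diff_distrib)

text \<open>
  A binary quadratic form with negative leading coefficient and positive discriminant m11
  m22 - m12^2 is negative definite (complete the square).
\<close>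
lemma binary_form_neg:
  fixes m11 m12 m22 x y :: real
  assumes "m11 < 0" "m11*m22 - m12^2 > 0" "x \<noteq> 0 \<or> y \<noteq> 0"
  shows "m11*x^2 + 2*m12*x*y + m22*y^2 < 0"
proof -
  have sq: "m11*(m11*x^2 + 2*m12*x*y + m22*y^2) = (m11*x + m12*y)^2 + (m11*m22 - m12^2)*y^2"
    by (simp add: power2_eq_square algebra_simps)
  have "(m11*x + m12*y)^2 + (m11*m22 - m12^2)*y^2 > 0"
  proof (cases "y = 0")
    case True
    then show ?thesis using assms by simp
  next
    case False
    then have "(m11*m22 - m12^2)*y^2 > 0" using assms by simp
    then show ?thesis by (smt (verit) zero_le_power2)
  qed
  then have "m11*(m11*x^2 + 2*m12*x*y + m22*y^2) > 0" using sq by simp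
  then show ?thesis using assms(1) by (simp add: zero_less_mult_iff)
qed

lemma quadratic_form_2:
  "x \<bullet> ((M::real^2^2) *v x) = M$1$1*(x$1)^2 + (M$1$2 + M$2$1)*x$1*x$2 + M$2$2*(x$2)^2"
  by (simp add: inner_vec_def matrix_vector_mult_def sum_2 power2_eq_square algebra_simps)

lemma neg_def_2x2:
  fixes M :: "real^2^2"
  assumes "transpose M = M" "M$1$1 < 0" "det M > 0"
  shows "neg_def M"
  unfolding neg_def_def
proof (intro allI impI)
  fix x :: "real^2" assume "x \<noteq> 0"
  then have "x$1 \<noteq> 0 \<or> x$2 \<noteq> 0" by (auto simp: vec_eq_iff forall_2)
  moreover have "M$2$1 = M$1$2" using assms(1) by (rule symmetric_2x2_entry)
  ultimately show "x \<bullet> (M *v x) < 0"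
    using binary_form_neg[of "M$1$1" "M$2$2" "M$1$2" "x$1" "x$2"] assms(2,3)
    by (simp add: quadratic_form_2 det_2 power2_eq_square algebra_simps)
qed

definition sylvester_pd :: "real^2^2 \<Rightarrow> bool" where
  "sylvester_pd P \<longleftrightarrow> transpose P = P \<and> 0 < P$1$1 \<and> 0 < det P"

lemma sylvester_pd_imp_pos_def:
  assumes "sylvester_pd P"
  shows "pos_def P"
proof -
  have "transpose (-P) = - transpose P" "det (-P) = det P"
    by (simp_all add: vec_eq_iff transpose_def det_2)
  then have "transpose (-P) = -P" "(-P)$1$1 < 0" "det (-P) > 0"
    using assms unfolding sylvester_pd_def by simp_all
  then have "neg_def (-P)" by (rule neg_def_2x2)
  then show ?thesis
    unfolding neg_def_def pos_def_def by (simp add: matrix_vector_mult_def inner_vec_def sum_negf)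
qed

lemma sylvester_pd_sign:
  fixes K :: "real^2^2"
  assumes "transpose K = K" "det K > 0" "K$1$1 \<noteq> 0"
  shows "sylvester_pd K \<or> sylvester_pd (-K)"
proof -
  have "transpose (-K) = -K" "det (-K) = det K"
    using assms(1) by (simp_all add: vec_eq_iff transpose_def det_2)
  then show ?thesis using assms unfolding sylvester_pd_def by auto
qed

text \<open>
  The twist of A against P is the skew part of PA: PA - (PA)^T = twist A P * J with J the
  rotation by a right angle. It is linear in P, and besides determinants it is the only
  quantity entering the Lyapunov condition.
\<close>
definition twist :: "real^2^2 \<Rightarrow> real^2^2 \<Rightarrow> real" where
  "twist A P = (P ** A)$1$2 - (P ** A)$2$1"

lemma twist_uminus: "twist A (-P) = - twist A P"
  by (simp add: twist_def matrix_matrix_mult_def sum_2 algebra_simps)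

lemma det_add_transpose:
  fixes N :: "'a::comm_ring_1^2^2"
  shows "det (N + transpose N) = 4 * det N - (N$1$2 - N$2$1)^2"
  by (simp add: det_2 transpose_def power2_eq_square algebra_simps)

lemma det_lyapunov:
  fixes A P :: "real^2^2"
  assumes "transpose P = P"
  shows "det (transpose A ** P + P ** A) = 4 * det A * det P - (twist A P)^2"
proof -
  have "transpose (P ** A) = transpose A ** P"
    using assms by (simp add: matrix_transpose_mul)
  then have "det (transpose A ** P + P ** A) = det (P ** A + transpose (P ** A))"
    by (simp add: add.commute)
  also have "\<dots> = 4 * det A * det P - (twist A P)^2"
    unfolding det_add_transpose twist_def by (simp add: det_mul)
  finally show ?thesis .
qed

text \<open>
  Pairing the Lyapunov matrix M = A^T P + P A with the adjugate of P gives tr (adj P * M) =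
  2 det P tr A.
\<close>
lemma adjugate_pairing_lyapunov:
  fixes A P :: "real^2^2"
  assumes "transpose P = P"
  defines "M \<equiv> transpose A ** P + P ** A"
  shows "P$2$2 * M$1$1 + P$1$1 * M$2$2 - 2 * P$1$2 * M$1$2 = 2 * det P * trace A"
  using symmetric_2x2_entry[OF assms(1)]
  by (simp add: M_def matrix_matrix_mult_def transpose_def sum_2 det_2 trace_def algebra_simps)

text \<open>
  The trace of the product of two positive definite 2x2 matrices is positive (stated for the
  adjugate of the first one, in coordinates).
\<close>
lemma pairing_pos:
  fixes p q r m11 m12 m22 :: real
  assumes "p > 0" "p*r > q^2" "m11 > 0" "m11*m22 > m12^2"
  shows "r*m11 + p*m22 - 2*q*m12 > 0"
proof -
  have "r > 0" "m22 > 0"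
    using assms by (smt (verit) zero_le_power2 mult_nonneg_nonpos)+
  have "q^2*m12^2 < (p*r)*(m11*m22)"
    using assms by (smt (verit) mult_strict_mono' zero_le_power2 mult_mono)
  then have "4*q^2*m12^2 < 4*(p*r)*(m11*m22)" by simp
  also have "\<dots> \<le> (r*m11 + p*m22)^2"
    using zero_le_power2[of "r*m11 - p*m22"] by (simp add: power2_eq_square algebra_simps)
  finally have "(2*q*m12)^2 < (r*m11 + p*m22)^2" by (simp add: power_mult_distrib)
  then have "2*q*m12 < r*m11 + p*m22"
    using \<open>r > 0\<close> \<open>m22 > 0\<close> assms
    by (smt (verit) power_mono zero_less_mult_iff abs_le_square_iff)
  then show ?thesis by simp
qed

text \<open>The determinantal Lyapunov condition; by the key identity it says det (A^T P + P A) > 0.\<close>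
definition twist_bound :: "real^2^2 \<Rightarrow> real^2^2 \<Rightarrow> bool" where
  "twist_bound A P \<longleftrightarrow> (twist A P)^2 < 4 * det A * det P"

lemma twist_bound_uminus: "twist_bound A (-P) \<longleftrightarrow> twist_bound A P"
  by (simp add: twist_bound_def twist_uminus det_2)

text \<open>
  It is definite
  because its determinant is positive, and negative because its pairing with adj P equals 2
  det P tr A < 0.
\<close>
lemma lyapunov_2x2:
  fixes A P :: "real^2^2"
  assumes P: "sylvester_pd P" and tr: "trace A < 0" and bound: "twist_bound A P"
  shows "neg_def (transpose A ** P + P ** A)"
proof -
  define M where "M = transpose A ** P + P ** A"
  have sym: "transpose P = P" and pos: "P$1$1 > 0" "det P > 0"
    using P unfolding sylvester_pd_def by auto
  have symM: "transpose M = M"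
    unfolding M_def using sym by (simp add: transpose_add matrix_transpose_mul add.commute)
  have detM: "det M > 0"
    using bound det_lyapunov[OF sym, of A] unfolding M_def twist_bound_def by simp
  then have detM': "M$1$1 * M$2$2 > (M$1$2)^2"
    using symmetric_2x2_entry[OF symM] by (simp add: det_2 power2_eq_square)
  have "M$1$1 < 0"
  proof (rule ccontr)
    assume "\<not> M$1$1 < 0"
    then have "M$1$1 > 0"
      using detM' by (cases "M$1$1 = 0") auto
    moreover have "P$1$1 * P$2$2 > (P$1$2)^2"
      using pos symmetric_2x2_entry[OF sym] by (simp add: det_2 power2_eq_square)
    ultimately have "P$2$2 * M$1$1 + P$1$1 * M$2$2 - 2 * P$1$2 * M$1$2 > 0"
      using pairing_pos pos(1) detM' by blast
    moreover have "2 * det P * trace A < 0"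
      using pos(2) tr by (simp add: mult_pos_neg)
    ultimately show False
      using adjugate_pairing_lyapunov[OF sym, of A] unfolding M_def by simp
  qed
  then show ?thesis
    unfolding M_def[symmetric] using neg_def_2x2 symM detM by blast
qed

text \<open>
  A common certificate for A1 and A2: a positive definite P satisfying the twist bound for
  both matrices. By the Lyapunov lemma it is a common quadratic Lyapunov function.
\<close>
definition common_certificate :: "real^2^2 \<Rightarrow> real^2^2 \<Rightarrow> real^2^2 \<Rightarrow> bool" where
  "common_certificate A1 A2 P \<longleftrightarrow> sylvester_pd P \<and> twist_bound A1 P \<and> twist_bound A2 P"

lemma twist_add_mat: "twist A (P + mat e) = twist A P + e * (A$1$2 - A$2$1)"
  by (simp add: twist_def matrix_matrix_mult_def sum_2 mat_def algebra_simps)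

lemma det_add_mat:
  fixes P :: "'a::comm_ring_1^2^2"
  shows "det (P + mat e) = det P + e * trace P + e^2"
  by (simp add: det_2 trace_def sum_2 mat_def power2_eq_square algebra_simps)

text \<open>
  If a positive semidefinite P0 with positive trace has zero twist against A and det A > 0,
  then P0 + e I satisfies the twist bound for all small e > 0: the twist grows like e, the
  determinant at least like e tr P0.
\<close>
lemma twist_bound_perturb:
  fixes A P0 :: "real^2^2"
  assumes "twist A P0 = 0" "det A > 0" "det P0 \<ge> 0" "trace P0 > 0"
  shows "eventually (\<lambda>e. twist_bound A (P0 + mat e)) (at_right 0)"
proof -
  define g where "g = A$1$2 - A$2$1"
  define c where "c = 4 * det A * trace P0"
  have c: "c > 0" using assms unfolding c_def by simp
  have "twist_bound A (P0 + mat e)" if e: "0 < e" "e < c / (g^2 + 1)" for e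
  proof -
    have "e * g^2 \<le> e * (g^2 + 1)" using e by simp
    also have "\<dots> < c"
      using e pos_less_divide_eq[of "g^2 + 1" e c] by (simp add: add_nonneg_pos mult.commute)
    finally have "e * (e * g^2) < e * c" using e by simp
    then have "(e * g)^2 < e * c" by (simp add: power2_eq_square algebra_simps)
    also have "\<dots> \<le> 4 * det A * (det P0 + e * trace P0 + e^2)"
      using assms e unfolding c_def by (simp add: algebra_simps)
    finally show ?thesis
      unfolding twist_bound_def twist_add_mat det_add_mat assms(1) g_def by simp
  qed
  moreover have "c / (g^2 + 1) > 0" using c by (simp add: add_nonneg_pos)
  ultimately show ?thesis unfolding eventually_at_right_field by blast
qed

lemma sylvester_pd_perturb:
  fixes P0 :: "real^2^2"
  assumes sym: "transpose P0 = P0" and "det P0 \<ge> 0" "trace P0 > 0"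
  shows "eventually (\<lambda>e. sylvester_pd (P0 + mat e)) (at_right 0)"
proof -
  have "P0$1$1 * P0$2$2 \<ge> (P0$1$2)^2" "P0$1$1 + P0$2$2 > 0"
    using assms symmetric_2x2_entry[OF sym] by (simp_all add: det_2 trace_def sum_2 power2_eq_square)
  then have p: "P0$1$1 \<ge> 0" by (smt (verit) zero_le_power2 mult_nonneg_nonpos mult_less_0_iff)
  have pd: "sylvester_pd (P0 + mat e)" if "e > 0" for e
  proof -
    have "(P0 + mat e)$1$1 = P0$1$1 + e" by (simp add: mat_def)
    then show ?thesis
      unfolding sylvester_pd_def det_add_mat
      using sym p that assms(2,3) by (simp add: transpose_add add_nonneg_pos)
  qed
  show ?thesis by (rule eventually_mono[OF eventually_at_right_less pd])
qed

lemma common_certificate_from_kernel_pos: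
  fixes A1 A2 P0 :: "real^2^2"
  assumes "transpose P0 = P0" "det P0 \<ge> 0" "trace P0 > 0"
    and "twist A1 P0 = 0" "twist A2 P0 = 0" "det A1 > 0" "det A2 > 0"
  shows "\<exists>P. common_certificate A1 A2 P"
proof -
  have "eventually (\<lambda>e. common_certificate A1 A2 (P0 + mat e)) (at_right 0)"
    unfolding common_certificate_def using assms
    by (intro eventually_conj sylvester_pd_perturb twist_bound_perturb)
  then show ?thesis
    using eventually_happens'[OF trivial_limit_at_right_real] by blast
qed

lemma common_certificate_from_kernel:
  fixes A1 A2 P0 :: "real^2^2"
  assumes "transpose P0 = P0" "det P0 \<ge> 0" "trace P0 \<noteq> 0"
    and "twist A1 P0 = 0" "twist A2 P0 = 0" "det A1 > 0" "det A2 > 0"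
  shows "\<exists>P. common_certificate A1 A2 P"
proof (cases "trace P0 > 0")
  case True
  then show ?thesis using assms common_certificate_from_kernel_pos by blast
next
  case False
  have "transpose (-P0) = -P0" "det (-P0) = det P0" "trace (-P0) = - trace P0"
    using assms(1) by (simp_all add: vec_eq_iff transpose_def det_2 trace_def sum_negf)
  then show ?thesis
    using False assms twist_uminus common_certificate_from_kernel_pos[of "-P0" A1 A2] by simp
qed

lemma trace_commutator:
  fixes A B :: "'a::comm_ring_1^'n^'n"
  shows "trace (A ** B - B ** A) = 0"
  by (simp add: trace_sub trace_mul_sym[of A B])

text \<open>By cyclicity of the trace, the commutator [A,B] is trace-orthogonal to A and to B.\<close>
lemma trace_commutator_mul:
  fixes A B :: "'a::comm_ring_1^'n^'n"
  shows "trace ((A ** B - B ** A) ** A) = 0" and "trace ((A ** B - B ** A) ** B) = 0"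
proof -
  have "trace (A ** B ** A) = trace (B ** A ** A)"
    using trace_mul_sym[of A "B ** A"] by (simp add: matrix_mul_assoc)
  then show "trace ((A ** B - B ** A) ** A) = 0"
    by (simp add: matrix_diff_rdistrib trace_sub)
  have "trace (A ** B ** B) = trace (B ** A ** B)"
    using trace_mul_sym[of "A ** B" B] by (simp add: matrix_mul_assoc)
  then show "trace ((A ** B - B ** A) ** B) = 0"
    by (simp add: matrix_diff_rdistrib trace_sub)
qed

definition rot :: "real^2^2" where
  "rot = (\<chi> i j. if i = 1 \<and> j = 2 then 1 else if i = 2 \<and> j = 1 then -1 else 0)"

lemma rot_mul_entries:
  fixes C :: "real^2^2"
  shows "(rot ** C)$1$1 = C$2$1" "(rot ** C)$1$2 = C$2$2"
  "(rot ** C)$2$1 = - C$1$1" "(rot ** C)$2$2 = - C$1$2"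
  by (simp_all add: rot_def matrix_matrix_mult_def sum_2)

lemma twist_rot_mul:
  fixes C :: "real^2^2"
  shows "twist A (rot ** C) = trace (C ** A)"
  by (simp add: twist_def trace_def sum_2 matrix_matrix_mult_def rot_def algebra_simps)

lemma rot_mul_symmetric:
  fixes C :: "real^2^2"
  assumes "trace C = 0"
  shows "transpose (rot ** C) = rot ** C"
  using assms by (simp add: vec_eq_iff forall_2 transpose_def rot_mul_entries trace_def sum_2)

lemma det_rot_mul:
  fixes C :: "real^2^2"
  shows "det (rot ** C) = det C"
  by (simp add: det_2 rot_mul_entries algebra_simps)

lemma rot_mul_eq_0:
  fixes C :: "real^2^2"
  shows "rot ** C = 0 \<longleftrightarrow> C = 0"
  by (auto simp: matrix2_eq_iff rot_mul_entries)

lemma psd_nonzero_trace_nonzero: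
  fixes P :: "real^2^2"
  assumes "transpose P = P" "det P \<ge> 0" "P \<noteq> 0"
  shows "trace P \<noteq> 0"
proof
  assume "trace P = 0"
  then have "P$2$2 = - P$1$1" by (simp add: trace_def sum_2)
  then have "(P$1$1)^2 + (P$1$2)^2 \<le> 0"
    using assms(2) symmetric_2x2_entry[OF assms(1)] by (simp add: det_2 power2_eq_square)
  then have "P$1$1 = 0" "P$1$2 = 0"
    by (smt (verit) zero_le_power2 power_zero_numeral zero_eq_power2)+
  then show False
    using assms(3) \<open>P$2$2 = - P$1$1\<close> symmetric_2x2_entry[OF assms(1)] by (simp add: matrix2_eq_iff)
qed

text \<open>
  Noncommuting case: for C = [A1, A2] \<noteq> 0 with det C \<ge> 0, the matrix J C is
  symmetric, semidefinite and nonzero, and it has zero twist against both Ai because tr (C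
  Ai) = 0.
\<close>
lemma noncommuting_case:
  fixes A1 A2 :: "real^2^2"
  defines "C \<equiv> A1 ** A2 - A2 ** A1"
  assumes "C \<noteq> 0" "det C \<ge> 0" "det A1 > 0" "det A2 > 0"
  shows "\<exists>P. common_certificate A1 A2 P"
proof (rule common_certificate_from_kernel)
  show sym: "transpose (rot ** C) = rot ** C"
    unfolding C_def by (intro rot_mul_symmetric trace_commutator)
  show "det (rot ** C) \<ge> 0" using assms by (simp add: det_rot_mul)
  show "trace (rot ** C) \<noteq> 0"
    using psd_nonzero_trace_nonzero[OF sym] assms by (simp add: det_rot_mul rot_mul_eq_0)
  show "twist A1 (rot ** C) = 0" "twist A2 (rot ** C) = 0"
    unfolding twist_rot_mul C_def by (rule trace_commutator_mul)+
qed (use assms in auto)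

definition traceless :: "real^2^2 \<Rightarrow> real^2^2" where
  "traceless A = A - mat (trace A / 2)"

lemma traceless_entries:
  "traceless A $1$1 = (A$1$1 - A$2$2) / 2" "traceless A $1$2 = A$1$2"
  "traceless A $2$1 = A$2$1" "traceless A $2$2 = (A$2$2 - A$1$1) / 2"
  by (simp_all add: traceless_def mat_def trace_def sum_2 field_simps)

lemma trace_traceless: "trace (traceless A) = 0"
  by (simp add: trace_def sum_2 traceless_entries field_simps)

text \<open>
  det A = det A0 + (tr A)^2 / 4 for the traceless part A0; so det A0 < det A when tr A
  \<noteq> 0, and det A0 \<le> 0 means real eigenvalues.
\<close>
lemma det_traceless: "det A = det (traceless A) + (trace A)^2 / 4"
  by (simp add: det_2 traceless_entries trace_def sum_2 power2_eq_square field_simps)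

lemma twist_traceless: "transpose P = P \<Longrightarrow> twist A P = twist (traceless A) P"
  using symmetric_2x2_entry[of P]
  by (simp add: twist_def matrix_matrix_mult_def sum_2 traceless_entries field_simps)

lemma twist_scaleR: "twist (c *\<^sub>R A) P = c * twist A P"
  by (simp add: twist_def matrix_matrix_mult_def sum_2 algebra_simps)

lemma twist_proportional:
  assumes "transpose P = P" "traceless A2 = c *\<^sub>R traceless A1"
  shows "twist A2 P = c * twist A1 P"
proof -
  have "twist A2 P = twist (traceless A2) P" by (rule twist_traceless[OF assms(1)])
  also have "\<dots> = c * twist (traceless A1) P" unfolding assms(2) by (rule twist_scaleR)
  also have "\<dots> = c * twist A1 P" using twist_traceless[OF assms(1), of A1] by simp
  finally show ?thesis .
qed

lemma commuting_entries:
  fixes A1 A2 :: "real^2^2"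
  assumes comm: "A1 ** A2 = A2 ** A1"
  shows "A1$1$2*A2$2$1 - A2$1$2*A1$2$1 = 0"
    and "A1$1$1*A2$1$2 + A1$1$2*A2$2$2 - A2$1$1*A1$1$2 - A2$1$2*A1$2$2 = 0"
    and "A1$2$1*A2$1$1 + A1$2$2*A2$2$1 - A2$2$1*A1$1$1 - A2$2$2*A1$2$1 = 0"
proof -
  have E: "(A1 ** A2)$i$j - (A2 ** A1)$i$j = 0" for i j using comm by simp
  show "A1$1$2*A2$2$1 - A2$1$2*A1$2$1 = 0"
    using E[of 1 1] by (simp add: matrix_matrix_mult_def sum_2 mult.commute)
  show "A1$1$1*A2$1$2 + A1$1$2*A2$2$2 - A2$1$1*A1$1$2 - A2$1$2*A1$2$2 = 0"
    using E[of 1 2] by (simp add: matrix_matrix_mult_def sum_2 mult.commute)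
  show "A1$2$1*A2$1$1 + A1$2$2*A2$2$1 - A2$2$1*A1$1$1 - A2$2$2*A1$2$1 = 0"
    using E[of 2 1] by (simp add: matrix_matrix_mult_def sum_2 mult.commute)
qed

text \<open>
  Commuting 2x2 matrices have proportional traceless parts once the first one is nonzero;
  the factor is k/n, with n the squared norm of the entries b1, c1, d1 - a1 of A1 and k the
  corresponding inner product with A2.
\<close>
lemma commuting_traceless_proportional:
  fixes A1 A2 :: "real^2^2"
  assumes comm: "A1 ** A2 = A2 ** A1" and nz: "traceless A1 \<noteq> 0"
  shows "\<exists>c. traceless A2 = c *\<^sub>R traceless A1"
proof -
  let ?a1 = "A1$1$1" and ?b1 = "A1$1$2" and ?c1 = "A1$2$1" and ?d1 = "A1$2$2"
  let ?a2 = "A2$1$1" and ?b2 = "A2$1$2" and ?c2 = "A2$2$1" and ?d2 = "A2$2$2"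
  have C11: "?b1*?c2 - ?b2*?c1 = 0" and C12: "?a1*?b2 + ?b1*?d2 - ?a2*?b1 - ?b2*?d1 = 0"
    and C21: "?c1*?a2 + ?d1*?c2 - ?c2*?a1 - ?d2*?c1 = 0"
    using commuting_entries[OF comm] by simp_all
  define n where "n = ?b1^2 + ?c1^2 + (?d1-?a1)^2"
  define k where "k = ?b1*?b2 + ?c1*?c2 + (?d1-?a1)*(?d2-?a2)"
  have "?b1 \<noteq> 0 \<or> ?c1 \<noteq> 0 \<or> ?d1 - ?a1 \<noteq> 0"
    using nz by (auto simp: matrix2_eq_iff traceless_entries)
  then have n: "n > 0" unfolding n_def
    by (auto simp: add_pos_nonneg add_nonneg_pos)
  let ?C11 = "?b1*?c2 - ?b2*?c1" and ?C12 = "?a1*?b2 + ?b1*?d2 - ?a2*?b1 - ?b2*?d1"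
    and ?C21 = "?c1*?a2 + ?d1*?c2 - ?c2*?a1 - ?d2*?c1"
  have "n*?b2 - k*?b1 = -(?c1 * ?C11 + (?d1-?a1) * ?C12)"
       "n*?c2 - k*?c1 = (?d1-?a1) * ?C21 + ?b1 * ?C11"
       "n*(?d2-?a2) - k*(?d1-?a1) = ?b1 * ?C12 - ?c1 * ?C21"
    unfolding n_def k_def by (simp_all add: power2_eq_square algebra_simps)
  then have "n*?b2 = k*?b1" "n*?c2 = k*?c1" "n*(?d2-?a2) = k*(?d1-?a1)"
    unfolding C11 C12 C21 by simp_all
  then have "traceless A2 = (k/n) *\<^sub>R traceless A1"
    using n by (simp add: matrix2_eq_iff traceless_entries field_simps)
  then show ?thesis ..
qed

text \<open>
  For traceless B and a matrix A with traceless part c B: (twist A (J B))^2 = 4 det A0 det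
  B, since tr (B A) = c tr (B^2) = -2 c det B.
\<close>
lemma twist_rot_traceless:
  fixes A B :: "real^2^2"
  assumes B: "trace B = 0" and traceless_eq: "traceless A = c *\<^sub>R B"
  shows "(twist A (rot ** B))^2 = 4 * det (traceless A) * det B"
proof -
  have d: "traceless A $i$j = c * B$i$j" for i j using traceless_eq by simp
  have e: "A$1$2 = c * B$1$2" "A$2$1 = c * B$2$1" "A$1$1 - A$2$2 = 2 * c * B$1$1"
    using d[of 1 2] d[of 2 1] d[of 1 1] by (simp_all add: traceless_entries)
  have B22: "B$2$2 = - B$1$1" using B by (simp add: trace_def sum_2)
  have "twist A (rot ** B) = trace (B ** A)" by (rule twist_rot_mul)
  also have "\<dots> = B$1$1 * (A$1$1 - A$2$2) + B$1$2 * A$2$1 + B$2$1 * A$1$2"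
    using B22 by (simp add: trace_def sum_2 matrix_matrix_mult_def algebra_simps)
  also have "\<dots> = -2 * c * det B"
    unfolding e det_2 B22 by (simp add: algebra_simps)
  finally have "twist A (rot ** B) = -2 * c * det B" .
  moreover have "det (traceless A) = c^2 * det B"
    unfolding traceless_eq by (simp add: det_2 power2_eq_square algebra_simps)
  ultimately show ?thesis by (simp add: power2_eq_square algebra_simps)
qed

text \<open>
  Commuting case with complex eigenvalues (det A1_0 > 0): one of \<plusminus>J A1_0 is a
  common certificate, because its twists reach exactly 4 det Ai_0 det P, which is strictly
  below 4 det Ai det P.
\<close>
lemma commuting_case_complex:
  fixes A1 A2 :: "real^2^2"
  assumes traceless_eq: "traceless A2 = c *\<^sub>R traceless A1"
    and detB: "det (traceless A1) > 0"
    and tr: "trace A1 \<noteq> 0" "trace A2 \<noteq> 0"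
  shows "\<exists>P. common_certificate A1 A2 P"
proof -
  define B where "B = traceless A1"
  define K where "K = rot ** B"
  have trB: "trace B = 0" unfolding B_def by (rule trace_traceless)
  have symK: "transpose K = K" unfolding K_def B_def by (intro rot_mul_symmetric trace_traceless)
  have detK: "det K = det B" unfolding K_def by (rule det_rot_mul)
  have "K$1$1 \<noteq> 0"
  proof
    assume "K$1$1 = 0"
    then have "B$2$1 = 0" unfolding K_def by (simp add: rot_mul_entries)
    moreover have "B$2$2 = - B$1$1" using trB by (simp add: trace_def sum_2)
    ultimately have "det B \<le> 0" by (simp add: det_2)
    then show False using detB unfolding B_def by simp
  qed
  then obtain P where P: "sylvester_pd P" "P = K \<or> P = -K"
    using sylvester_pd_sign[OF symK] detK detB unfolding B_def by auto
  have "twist_bound A K" if "traceless A = c' *\<^sub>R B" "trace A \<noteq> 0" for A c'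
  proof -
    have "(twist A K)^2 = 4 * det (traceless A) * det K"
      using twist_rot_traceless[OF trB that(1)] detK unfolding K_def by simp
    also have "\<dots> < 4 * det A * det K"
      using det_traceless[of A] that(2) detK detB unfolding B_def by simp
    finally show ?thesis unfolding twist_bound_def .
  qed
  then have "twist_bound A1 K" "twist_bound A2 K"
    using traceless_eq tr scaleR_one[of "traceless A1"] unfolding B_def by metis+
  then show ?thesis using P twist_bound_uminus unfolding common_certificate_def by auto
qed

definition outer :: "real^2 \<Rightarrow> real^2^2" where
  "outer w = (\<chi> i j. w$i * w$j)"

lemma twist_outer_eigenvector:
  fixes A :: "real^2^2"
  assumes "transpose A *v w = \<mu> *s w"
  shows "twist A (outer w) = 0"
proof -
  have "(transpose A *v w)$i = \<mu> * w$i" for i using assms by simp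
  then have e: "A$1$1 * w$1 + A$2$1 * w$2 = \<mu> * w$1" "A$1$2 * w$1 + A$2$2 * w$2 = \<mu> * w$2"
    by (simp_all add: matrix_vector_mult_def transpose_def sum_2)
  have "twist A (outer w) = w$1 * (A$1$2 * w$1 + A$2$2 * w$2) - w$2 * (A$1$1 * w$1 + A$2$1 * w$2)"
    by (simp add: twist_def outer_def matrix_matrix_mult_def sum_2 algebra_simps)
  also have "\<dots> = 0" unfolding e by simp
  finally show ?thesis .
qed

text \<open>
  If det A0 \<le> 0, the characteristic polynomial has a real root, so A^T has a real
  eigenvector.
\<close>
lemma real_eigenvector_transpose:
  fixes A :: "real^2^2"
  assumes "det (traceless A) \<le> 0"
  shows "\<exists>w \<mu>. w \<noteq> 0 \<and> transpose A *v w = \<mu> *s w"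
proof -
  define t where "t = trace A"
  define s where "s = sqrt (t^2 - 4 * det A)"
  have "t^2 - 4 * det A = - 4 * det (traceless A)"
    using det_traceless[of A] unfolding t_def by simp
  then have s: "s^2 = t^2 - 4 * det A"
    using assms unfolding s_def by simp
  have "((t + s)/2)^2 - t * ((t + s)/2) + det A = (s^2 - (t^2 - 4 * det A)) / 4"
    by (simp add: power2_eq_square field_simps)
  also have "\<dots> = 0" using s by simp
  moreover have "trace (transpose A) = t"
    unfolding t_def by (simp add: trace_def transpose_def)
  ultimately have "((t + s)/2)^2 - trace (transpose A) * ((t + s)/2) + det (transpose A) = 0"
    by simp
  then show ?thesis using char_root_eigenvector by blast
qed

text \<open>
  Commuting case with real eigenvalues (det A1_0 \<le> 0): w w^T, for a real eigenvector w
  of A1^T, lies in the common kernel of both twists.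
\<close>
lemma commuting_case_real:
  fixes A1 A2 :: "real^2^2"
  assumes traceless_eq: "traceless A2 = c *\<^sub>R traceless A1"
    and detB: "det (traceless A1) \<le> 0"
    and "det A1 > 0" "det A2 > 0"
  shows "\<exists>P. common_certificate A1 A2 P"
proof -
  obtain w \<mu> where w: "w \<noteq> 0" "transpose A1 *v w = \<mu> *s w"
    using real_eigenvector_transpose[OF detB] by blast
  have sym: "transpose (outer w) = outer w"
    by (simp add: outer_def transpose_def vec_eq_iff mult.commute)
  have "trace (outer w) = (w$1)^2 + (w$2)^2"
    by (simp add: outer_def trace_def sum_2 power2_eq_square)
  moreover have "w$1 \<noteq> 0 \<or> w$2 \<noteq> 0" using w(1) by (auto simp: vec_eq_iff forall_2)
  ultimately have "trace (outer w) \<noteq> 0"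
    by (auto simp: add_pos_nonneg add_nonneg_pos)
  moreover have "det (outer w) = 0" by (simp add: outer_def det_2 algebra_simps)
  moreover have twist1: "twist A1 (outer w) = 0" using w(2) by (rule twist_outer_eigenvector)
  moreover have "twist A2 (outer w) = 0"
    using twist_proportional[OF sym traceless_eq] twist1 by simp
  ultimately show ?thesis
    using common_certificate_from_kernel[OF sym] assms by simp
qed

lemma commuting_case:
  fixes A1 A2 :: "real^2^2"
  assumes "A1 ** A2 = A2 ** A1" "traceless A1 \<noteq> 0"
    and "trace A1 \<noteq> 0" "trace A2 \<noteq> 0" "det A1 > 0" "det A2 > 0"
  shows "\<exists>P. common_certificate A1 A2 P"
proof -
  obtain c where c: "traceless A2 = c *\<^sub>R traceless A1"
    using commuting_traceless_proportional assms(1,2) by blast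
  show ?thesis
  proof (cases "det (traceless A1) > 0")
    case True
    then show ?thesis using commuting_case_complex[OF c] assms by blast
  next
    case False
    then show ?thesis using commuting_case_real[OF c] assms by simp
  qed
qed

text \<open>
  Existence of a common certificate under the hypotheses of the theorem, by cases on the
  commutator and on the traceless parts; when both traceless parts vanish, I itself lies in
  the common kernel.
\<close>
lemma common_certificate_exists:
  fixes A1 A2 :: "real^2^2"
  assumes "trace A1 < 0" "trace A2 < 0" "det A1 > 0" "det A2 > 0"
    and "det (A1 ** A2 - A2 ** A1) \<ge> 0"
  shows "\<exists>P. common_certificate A1 A2 P"
proof -
  consider "A1 ** A2 \<noteq> A2 ** A1" | "A1 ** A2 = A2 ** A1" "traceless A1 \<noteq> 0"
    | "A1 ** A2 = A2 ** A1" "traceless A2 \<noteq> 0" | "traceless A1 = 0" "traceless A2 = 0"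
    by blast
  then show ?thesis
  proof cases
    case 1
    then show ?thesis using noncommuting_case assms by simp
  next
    case 2
    then show ?thesis using commuting_case assms by simp
  next
    case 3
    then have "\<exists>P. common_certificate A2 A1 P" using commuting_case assms by simp
    then show ?thesis unfolding common_certificate_def by blast
  next
    case 4
    have "twist A (mat 1) = 0" if "traceless A = 0" for A :: "real^2^2"
      using twist_traceless[of "mat 1" A] that by (simp add: twist_def)
    then show ?thesis
      using 4 assms common_certificate_from_kernel[of "mat 1" A1 A2] by (simp add: trace_I)
  qed
qed

theorem mainTheorem2:
  fixes A1 A2 :: "real^2^2"
  assumes "hurwitz A1" and "hurwitz A2"
    and "det (A1 ** A2 - A2 ** A1) \<ge> 0"
  shows "\<exists>P::real^2^2. transpose P = P \<and> pos_def P \<and>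
           neg_def (transpose A1 ** P + P ** A1) \<and>
           neg_def (transpose A2 ** P + P ** A2)"
proof -
  have A1: "trace A1 < 0" "det A1 > 0" and A2: "trace A2 < 0" "det A2 > 0"
    using hurwitz_trace_det assms(1,2) by auto
  obtain P where P: "sylvester_pd P" "twist_bound A1 P" "twist_bound A2 P"
    using common_certificate_exists[OF A1(1) A2(1) A1(2) A2(2) assms(3)]
    unfolding common_certificate_def by blast
  have "transpose P = P" using P(1) unfolding sylvester_pd_def by simp
  moreover have "pos_def P" using P(1) by (rule sylvester_pd_imp_pos_def)
  moreover have "neg_def (transpose A1 ** P + P ** A1)" using lyapunov_2x2 P A1 by blast
  moreover have "neg_def (transpose A2 ** P + P ** A2)" using lyapunov_2x2 P A2 by blast
  ultimately show ?thesis by blast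
qed

end
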